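(* Let $(D,\Sigma)$ be a tropical linear series of rank $r$ on a metric graph $\Gamma$, and let $M$ be its local array at a point $v$ of valence $d\ge2$ (with tangent vectors ordered $\eta_1,\dots,\eta_d$). Then $M$ satisfies (P2'): for any distinct $i,j\in\{1,\dots,d\}$ and every pair of integers $r_i,r_j\ge0$ with $r_i+r_j=r$, there exist $\mathbf z,\mathbf w_1,\dots,\mathbf w_{r_i},\mathbf u_1,\dots,\mathbf u_{r_j}\in M$ such that (a) $w_{1,i}<w_{2,i}<\dots<w_{r_i,i}<z_i$; (b) $u_{1,j}<u_{2,j}<\dots<u_{r_j,j}<z_j$; (c) $u_{k,j}<w_{k',j}$ for all $1\le k\le r_j$ and $1\le k'\le r_i$. Here $w_{k,i}$ denotes the $i$-th coordinate of $\mathbf w_k$, and similarly for the others.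
   Context: A metric graph is obtained from a finite connected graph by identifying each edge with a closed interval of positive length. $T_v(\Gamma)$ is the set of outgoing tangent directions and the valence is $|T_v(\Gamma)|$. $\mathrm{sl}_\eta(f)$ is the outgoing slope of a continuous piecewise linear integer-slope function. We set $\mathrm{div}(f)=\sum_v(-\sum_{\eta\in T_v}\mathrm{sl}_\eta(f))v$ and $R(D)=\{f:D+\mathrm{div}(f)\ge0\}$ for a divisor $D$. A tropical linear series of rank $r$ is $(D,\Sigma)$ with $\Sigma\subseteq R(D)$ a finitely generated tropical submodule (closed under $\min\{f_i+a_i\}$, $a_i\in\mathbb R$) such that: (1) every effective divisor $E$ of degree $r$ admits $f\in\Sigma$ with $\mathrm{div}(f)+D\ge E$; (2) every $r+2$ functions of $\Sigma$ are tropically dependent (some $\min_i(f_i+a_i)$ is attained at least twice at every point). For such a series every slope set $\{\mathrm{sl}_\eta(f):f\in\Sigma\}$ has exactly $r+1$ elements $s_\eta[0]<\dots<s_\eta[r]$. The local array at $v$ is $M=\{\mathbf x\in[r]^d:\exists f\in\Sigma,\ \mathrm{sl}_{\eta_i}(f)=s_{\eta_i}[x_i]\ \forall i\}$, where $[r]=\{0,\dots,r\}$. *)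

theory Defs
  imports Complex_Main
begin

text \<open>Edge e is identified with the closed interval
[0, elen e], parameter 0 being src e and parameter elen e being tgt e.\<close>

record ('v,'e) mgraph =
  verts :: "'v set"
  edges :: "'e set"
  src   :: "'e \<Rightarrow> 'v"
  tgt   :: "'e \<Rightarrow> 'v"
  elen  :: "'e \<Rightarrow> real"

definition metric_graph :: "('v,'e) mgraph \<Rightarrow> bool" where
  "metric_graph G \<longleftrightarrow>
     finite (verts G) \<and> verts G \<noteq> {} \<and> finite (edges G) \<and>
     (\<forall>e\<in>edges G. src G e \<in> verts G \<and> tgt G e \<in> verts G \<and> elen G e > 0) \<and>
     (\<forall>x\<in>verts G. \<forall>y\<in>verts G.
        (x, y) \<in> ({(src G e, tgt G e) | e. e \<in> edges G} \<union>
                  {(tgt G e, src G e) | e. e \<in> edges G})\<^sup>*)"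

datatype ('v,'e) point = Vert 'v | Inner 'e real

definition points :: "('v,'e) mgraph \<Rightarrow> ('v,'e) point set" where
  "points G = Vert ` verts G \<union> {Inner e t | e t. e \<in> edges G \<and> 0 < t \<and> t < elen G e}"

text \<open>Outgoing tangent directions: (e, True) points along e in the direction of
increasing parameter, (e, False) in the direction of decreasing parameter.
A loop at v contributes two tangent directions at v.\<close>

definition tangents :: "('v,'e) mgraph \<Rightarrow> ('v,'e) point \<Rightarrow> ('e \<times> bool) set" where
  "tangents G p = (case p of
      Vert v \<Rightarrow> {(e, True) | e. e \<in> edges G \<and> src G e = v}
              \<union> {(e, False) | e. e \<in> edges G \<and> tgt G e = v}
    | Inner e t \<Rightarrow> {(e, True), (e, False)})"

definition valence :: "('v,'e) mgraph \<Rightarrow> ('v,'e) point \<Rightarrow> nat" where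
  "valence G p = card (tangents G p)"

definition coord :: "('v,'e) mgraph \<Rightarrow> ('v,'e) point \<Rightarrow> 'e \<times> bool \<Rightarrow> real" where
  "coord G p \<eta> = (case p of Vert v \<Rightarrow> (if snd \<eta> then 0 else elen G (fst \<eta>))
                          | Inner e t \<Rightarrow> t)"

definition edge_fun :: "('v,'e) mgraph \<Rightarrow> (('v,'e) point \<Rightarrow> real) \<Rightarrow> 'e \<Rightarrow> real \<Rightarrow> real" where
  "edge_fun G f e t =
     (if t = 0 then f (Vert (src G e))
      else if t = elen G e then f (Vert (tgt G e))
      else f (Inner e t))"

definition pl_int_on :: "real \<Rightarrow> (real \<Rightarrow> real) \<Rightarrow> bool" where
  "pl_int_on L g \<longleftrightarrow>
     (\<exists>ts :: real list. length ts \<ge> 2 \<and> sorted_wrt (<) ts \<and> hd ts = 0 \<and> last ts = L \<and>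
        (\<forall>k. Suc k < length ts \<longrightarrow>
           (\<exists>m :: int. \<forall>t. ts ! k \<le> t \<and> t \<le> ts ! Suc k \<longrightarrow>
                g t = g (ts ! k) + of_int m * (t - ts ! k))))"

definition PL :: "('v,'e) mgraph \<Rightarrow> (('v,'e) point \<Rightarrow> real) \<Rightarrow> bool" where
  "PL G f \<longleftrightarrow> (\<forall>e\<in>edges G. pl_int_on (elen G e) (edge_fun G f e))"

definition slope :: "('v,'e) mgraph \<Rightarrow> (('v,'e) point \<Rightarrow> real) \<Rightarrow> ('v,'e) point \<Rightarrow> 'e \<times> bool \<Rightarrow> real" where
  "slope G f p \<eta> =
     Lim (at_right 0) (\<lambda>h. (edge_fun G f (fst \<eta>) (coord G p \<eta> + (if snd \<eta> then h else - h))
                             - edge_fun G f (fst \<eta>) (coord G p \<eta>)) / h)"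

definition divf :: "('v,'e) mgraph \<Rightarrow> (('v,'e) point \<Rightarrow> real) \<Rightarrow> ('v,'e) point \<Rightarrow> real" where
  "divf G f p = - (\<Sum>\<eta>\<in>tangents G p. slope G f p \<eta>)"

definition divisor :: "('v,'e) mgraph \<Rightarrow> (('v,'e) point \<Rightarrow> int) \<Rightarrow> bool" where
  "divisor G D \<longleftrightarrow> finite {p. D p \<noteq> 0} \<and> {p. D p \<noteq> 0} \<subseteq> points G"

definition deg :: "(('v,'e) point \<Rightarrow> int) \<Rightarrow> int" where
  "deg D = (\<Sum>p\<in>{p. D p \<noteq> 0}. D p)"

definition effective_divisor :: "('v,'e) mgraph \<Rightarrow> (('v,'e) point \<Rightarrow> int) \<Rightarrow> bool" where
  "effective_divisor G E \<longleftrightarrow> divisor G E \<and> (\<forall>p. E p \<ge> 0)"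

definition RD :: "('v,'e) mgraph \<Rightarrow> (('v,'e) point \<Rightarrow> int) \<Rightarrow> (('v,'e) point \<Rightarrow> real) set" where
  "RD G D = {f. PL G f \<and> (\<forall>p\<in>points G. real_of_int (D p) + divf G f p \<ge> 0)}"

definition trop_comb :: "nat \<Rightarrow> (nat \<Rightarrow> ('p \<Rightarrow> real)) \<Rightarrow> (nat \<Rightarrow> real) \<Rightarrow> 'p \<Rightarrow> real" where
  "trop_comb n fs a p = Min ((\<lambda>i. fs i p + a i) ` {..<n})"

definition trop_submodule :: "('v,'e) mgraph \<Rightarrow> (('v,'e) point \<Rightarrow> real) set \<Rightarrow> bool" where
  "trop_submodule G \<Sigma> \<longleftrightarrow>
     (\<forall>n fs a. n > 0 \<and> (\<forall>i<n. fs i \<in> \<Sigma>) \<longrightarrow>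
        (\<exists>h\<in>\<Sigma>. \<forall>p\<in>points G. h p = trop_comb n fs a p))"

definition finitely_generated :: "('v,'e) mgraph \<Rightarrow> (('v,'e) point \<Rightarrow> real) set \<Rightarrow> bool" where
  "finitely_generated G \<Sigma> \<longleftrightarrow>
     (\<exists>Gs. finite Gs \<and> Gs \<subseteq> \<Sigma> \<and>
        (\<forall>f\<in>\<Sigma>. \<exists>n fs a. n > 0 \<and> (\<forall>i<n. fs i \<in> Gs) \<and>
                  (\<forall>p\<in>points G. f p = trop_comb n fs a p)))"

definition trop_dependent :: "('v,'e) mgraph \<Rightarrow> nat \<Rightarrow> (nat \<Rightarrow> (('v,'e) point \<Rightarrow> real)) \<Rightarrow> bool" where
  "trop_dependent G n fs \<longleftrightarrow>
     (\<exists>a :: nat \<Rightarrow> real. \<forall>p\<in>points G. \<exists>i1<n. \<exists>i2<n. i1 \<noteq> i2 \<and>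
        fs i1 p + a i1 = trop_comb n fs a p \<and> fs i2 p + a i2 = trop_comb n fs a p)"

definition trop_lin_series ::
  "('v,'e) mgraph \<Rightarrow> nat \<Rightarrow> (('v,'e) point \<Rightarrow> int) \<Rightarrow> (('v,'e) point \<Rightarrow> real) set \<Rightarrow> bool" where
  "trop_lin_series G r D \<Sigma> \<longleftrightarrow>
     divisor G D \<and> \<Sigma> \<subseteq> RD G D \<and> trop_submodule G \<Sigma> \<and> finitely_generated G \<Sigma> \<and>
     (\<forall>E. effective_divisor G E \<and> deg E = int r \<longrightarrow>
        (\<exists>f\<in>\<Sigma>. \<forall>p\<in>points G. real_of_int (D p) + divf G f p \<ge> real_of_int (E p))) \<and>
     (\<forall>fs. (\<forall>i<r+2. fs i \<in> \<Sigma>) \<longrightarrow> trop_dependent G (r+2) fs)"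

definition slope_set :: "('v,'e) mgraph \<Rightarrow> (('v,'e) point \<Rightarrow> real) set \<Rightarrow> ('v,'e) point \<Rightarrow> 'e \<times> bool \<Rightarrow> real set" where
  "slope_set G \<Sigma> p \<eta> = {slope G f p \<eta> | f. f \<in> \<Sigma>}"

definition sl_idx :: "('v,'e) mgraph \<Rightarrow> (('v,'e) point \<Rightarrow> real) set \<Rightarrow> ('v,'e) point \<Rightarrow> 'e \<times> bool \<Rightarrow> nat \<Rightarrow> real" where
  "sl_idx G \<Sigma> p \<eta> k = sorted_list_of_set (slope_set G \<Sigma> p \<eta>) ! k"

text \<open>Local array at p with respect to an ordering \<eta>_0, ..., \<eta>_{d-1} of the
tangent directions (0-based indices); vectors are x :: nat \<Rightarrow> nat with x i = 0
for i \<ge> d, and entries in [r] = {0..r}.\<close>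

definition local_array ::
  "('v,'e) mgraph \<Rightarrow> nat \<Rightarrow> (('v,'e) point \<Rightarrow> real) set \<Rightarrow> ('v,'e) point \<Rightarrow> (nat \<Rightarrow> 'e \<times> bool) \<Rightarrow> (nat \<Rightarrow> nat) set" where
  "local_array G r \<Sigma> p eta =
     {x. (\<forall>i<valence G p. x i \<le> r) \<and> (\<forall>i\<ge>valence G p. x i = 0) \<and>
         (\<exists>f\<in>\<Sigma>. \<forall>i<valence G p. slope G f p (eta i) = sl_idx G \<Sigma> p (eta i) (x i))}"

end

(* Near v every generator of Sigma is linear with integer slope on each tangent ray, so along
   a ray every f in Sigma is the lower envelope of finitely many lines with generator slopes;
   tropical dependence of r + 2 such functions bounds every slope set by r + 1.
   For the directions eta_i and eta_j place r_i points on the ray eta_i very close to v and r_j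
   points on the ray eta_j farther out, and take f in Sigma with D + div f at least their sum.
   D vanishes on the rays near v, so f bends at each point: two lines of different slopes are
   active there.
   On eta_i the lines active at the bends have slopes increasing towards v, all below the slope
   of f; they give the w's. On eta_j the bends produce r_j distinct slopes below that of a line
   active at the first bend, so the eta_j-slope of f has rank at least r_j, and so has the
   eta_j-slope of every line active close to v on eta_i, because such a line has almost minimal
   offset and integer slopes. The u's realise the ranks 0, ..., r_j - 1 along eta_j. *)

theory Submission
  imports Defs
begin

section \<open>Lower envelopes of lines\<close>

definition lower_envelope :: "nat \<Rightarrow> (nat \<Rightarrow> real) \<Rightarrow> (nat \<Rightarrow> real) \<Rightarrow> real \<Rightarrow> real" where
  "lower_envelope n C s x = Min ((\<lambda>i. C i + s i * x) ` {..<n})"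

definition active_lines :: "nat \<Rightarrow> (nat \<Rightarrow> real) \<Rightarrow> (nat \<Rightarrow> real) \<Rightarrow> real \<Rightarrow> nat set" where
  "active_lines n C s t = {i. i < n \<and> C i + s i * t = lower_envelope n C s t}"

lemma lower_envelope_le: "i < n \<Longrightarrow> lower_envelope n C s x \<le> C i + s i * x"
  unfolding lower_envelope_def by (rule Min_le) auto

lemma lower_envelope_attained:
  assumes "n > 0"
  obtains i where "i < n" "lower_envelope n C s x = C i + s i * x"
proof -
  have "lower_envelope n C s x \<in> (\<lambda>i. C i + s i * x) ` {..<n}"
    unfolding lower_envelope_def using assms by (intro Min_in) auto
  then show ?thesis using that by auto
qed

lemma active_lines_less: "i \<in> active_lines n C s t \<Longrightarrow> i < n"
  unfolding active_lines_def by simp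

lemma finite_active_lines: "finite (active_lines n C s t)"
  unfolding active_lines_def by simp

lemma active_lines_nonempty: "n > 0 \<Longrightarrow> active_lines n C s t \<noteq> {}"
  by (metis (mono_tags, lifting) active_lines_def empty_Collect_eq lower_envelope_attained)

lemma active_slope_antimono:
  assumes "x \<in> active_lines n C s t" "y \<in> active_lines n C s t'" "t < t'"
  shows "s y \<le> s x"
proof -
  have "C y + s y * t' \<le> C x + s x * t'" "C x + s x * t \<le> C y + s y * t"
    using assms lower_envelope_le[of x n C s t'] lower_envelope_le[of y n C s t]
    unfolding active_lines_def by auto
  then have "(s y - s x) * (t' - t) \<le> 0" by (simp add: algebra_simps)
  then show ?thesis using assms(3) by (simp add: mult_le_0_iff)
qed

lemma active_slope_le_Min_active:
  assumes "n > 0" "y \<in> active_lines n C s t" "t0 < t"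
  shows "s y \<le> Min (s ` active_lines n C s t0)"
proof -
  have "Min (s ` active_lines n C s t0) \<in> s ` active_lines n C s t0"
    using assms(1) finite_active_lines active_lines_nonempty by (intro Min_in) auto
  then show ?thesis using active_slope_antimono assms(2,3) by auto
qed

lemma lower_envelope_local:
  assumes "n > 0"
  shows "\<forall>\<^sub>F x in nhds t. lower_envelope n C s x = Min ((\<lambda>i. C i + s i * x) ` active_lines n C s t)"
proof -
  let ?A = "active_lines n C s t"
  obtain a where a: "a \<in> ?A" using active_lines_nonempty[OF assms] by blast
  have "\<forall>\<^sub>F x in nhds t. C a + s a * x < C i + s i * x" if "i \<in> {..<n} - ?A" for i
  proof -
    have "((\<lambda>x. (C i + s i * x) - (C a + s a * x)) \<longlongrightarrow> (C i + s i * t) - (C a + s a * t)) (nhds t)"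
      by (intro tendsto_intros filterlim_ident)
    moreover have "C a + s a * t < C i + s i * t"
      using that a lower_envelope_le[of i n C s t] unfolding active_lines_def by auto
    ultimately show ?thesis
      by (auto dest: order_tendstoD(1)[where a = 0] elim: eventually_mono)
  qed
  then have "\<forall>\<^sub>F x in nhds t. \<forall>i\<in>{..<n} - ?A. C a + s a * x < C i + s i * x"
    by (intro eventually_ball_finite) auto
  then show ?thesis
  proof (rule eventually_mono)
    fix x assume far: "\<forall>i\<in>{..<n} - ?A. C a + s a * x < C i + s i * x"
    let ?m = "Min ((\<lambda>i. C i + s i * x) ` ?A)"
    have "?m \<le> C i + s i * x" if "i < n" for i
    proof (cases "i \<in> ?A")
      case False
      have "?m \<le> C a + s a * x" using a finite_active_lines by simp
      moreover have "C a + s a * x < C i + s i * x" using far that False by blast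
      ultimately show ?thesis by linarith
    qed (simp add: finite_active_lines)
    then have "?m \<le> lower_envelope n C s x"
      unfolding lower_envelope_def using assms by (intro Min.boundedI) auto
    moreover have "lower_envelope n C s x \<le> ?m"
      unfolding lower_envelope_def using a by (intro Min_antimono) (auto dest: active_lines_less)
    ultimately show "lower_envelope n C s x = ?m" by simp
  qed
qed

lemma lower_envelope_right_slope:
  assumes "n > 0"
  shows "\<forall>\<^sub>F x in at_right t. lower_envelope n C s x =
           lower_envelope n C s t + Min (s ` active_lines n C s t) * (x - t)"
proof -
  let ?A = "active_lines n C s t"
  have "\<forall>\<^sub>F x in at_right t. lower_envelope n C s x = Min ((\<lambda>i. C i + s i * x) ` ?A)"
    using lower_envelope_local[OF assms, where t = t and C = C and s = s]
      by (auto simp: eventually_at_filter elim: eventually_mono)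
  moreover have "\<forall>\<^sub>F x in at_right t. t < x"
    by (simp add: eventually_at_right_less)
  ultimately show ?thesis
  proof eventually_elim
    case (elim x)
    let ?f = "\<lambda>y. lower_envelope n C s t + y * (x - t)"
    have "(\<lambda>i. C i + s i * x) ` ?A = ?f ` (s ` ?A)"
      unfolding active_lines_def image_image by (intro image_cong) (auto simp: algebra_simps)
    moreover have "mono ?f" using elim by (intro monoI) (simp add: mult_right_mono)
    then have "Min (?f ` (s ` ?A)) = ?f (Min (s ` ?A))"
      using assms
        by (intro mono_Min_commute[symmetric]) (auto simp: finite_active_lines active_lines_nonempty)
    ultimately show ?case using elim by simp
  qed
qed

lemma lower_envelope_locally_linear:
  assumes "n > 0" "\<forall>i\<in>active_lines n C s t. s i = \<sigma>"
  shows "\<forall>\<^sub>F x in nhds t. lower_envelope n C s x = lower_envelope n C s t + \<sigma> * (x - t)"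
  using lower_envelope_local[OF assms(1), where t = t and C = C and s = s]
proof eventually_elim
  case (elim x)
  have "(\<lambda>i. C i + s i * x) ` active_lines n C s t =
        (\<lambda>_. lower_envelope n C s t + \<sigma> * (x - t)) ` active_lines n C s t"
    using assms(2) unfolding active_lines_def by (intro image_cong) (auto simp: algebra_simps)
  then have "(\<lambda>i. C i + s i * x) ` active_lines n C s t = {lower_envelope n C s t + \<sigma> * (x - t)}"
    using active_lines_nonempty[OF assms(1)] by (simp add: image_constant_conv)
  then show ?case using elim by simp
qed

text \<open>Line x is active near 0, so its offset exceeds the minimal offset by at most 2 M t.
  If s' y > s' x, integrality gives s' y \<ge> s' x + 1, and y being active at t' would force
  the offset of x to exceed that of y by at least t'.\<close>

lemma active_slope_cross:
  assumes "x \<in> active_lines n C s t" "y \<in> active_lines n C s' t'"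
    and "\<forall>i<n. \<bar>s i\<bar> \<le> M" "s' x \<in> \<int>" "s' y \<in> \<int>" "0 \<le> t" "2 * M * t < t'"
  shows "s' y \<le> s' x"
proof (rule ccontr)
  assume "\<not> ?thesis"
  with assms(4,5) have gap: "1 \<le> s' y - s' x"
    by (elim Ints_cases) simp
  have xy: "x < n" "y < n" using assms(1,2) by (auto dest: active_lines_less)
  then obtain i where i: "i < n" "lower_envelope n C s 0 = C i + s i * 0"
    using lower_envelope_attained by (metis gr0I not_less0)
  have "C i \<le> C y" using lower_envelope_le[OF xy(2), of C s 0] i by simp
  moreover have "C x + s x * t \<le> C i + s i * t"
    using assms(1) lower_envelope_le[OF i(1), of C s t] unfolding active_lines_def by simp
  moreover have "(s i - s x) * t \<le> 2 * M * t"
  proof (intro mult_right_mono)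
    have "\<bar>s i\<bar> \<le> M" "\<bar>s x\<bar> \<le> M" using assms(3) i(1) xy(1) by auto
    then show "s i - s x \<le> 2 * M" by linarith
  qed (use assms(6) in simp)
  moreover have "C y + s' y * t' \<le> C x + s' x * t'"
    using assms(2) lower_envelope_le[OF xy(1), of C s' t'] unfolding active_lines_def by simp
  moreover have "0 \<le> M" using assms(3) xy(1) by force
  then have "0 \<le> 2 * M * t" using assms(6) by simp
  then have "0 \<le> t'" using assms(7) by linarith
  then have "1 * t' \<le> (s' y - s' x) * t'"
    using gap by (intro mult_right_mono)
  ultimately show False using assms(7) by (simp add: algebra_simps)
qed

lemma ex_no_ties:
  fixes C s :: "nat \<Rightarrow> real"
  assumes "inj_on s {..<n}" "a < b"
  obtains t where "a < t" "t < b" "\<forall>i<n. \<forall>j<n. C i + s i * t = C j + s j * t \<longrightarrow> i = j"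
proof -
  define X where "X = (\<lambda>(i, j). (C j - C i) / (s i - s j)) ` ({..<n} \<times> {..<n})"
  have "infinite ({a<..<b} - X)"
    using assms(2) unfolding X_def by (intro Diff_infinite_finite) auto
  then obtain t where t: "t \<in> {a<..<b}" "t \<notin> X"
    by (metis Diff_iff finite.emptyI ex_in_conv)
  have "i = j" if "i < n" "j < n" "C i + s i * t = C j + s j * t" for i j
  proof (rule ccontr)
    assume "i \<noteq> j"
    then have "s i - s j \<noteq> 0" using assms(1) that(1,2) by (auto dest: inj_onD)
    then have "t = (C j - C i) / (s i - s j)" using that(3) by (simp add: field_simps)
    then show False using t(2) that(1,2) unfolding X_def by force
  qed
  then show ?thesis using that t(1) by auto
qed

section \<open>Ranks in finite sets\<close>

definition rank :: "'a::linorder set \<Rightarrow> 'a \<Rightarrow> nat" where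
  "rank S s = card {y\<in>S. y < s}"

lemma rank_sorted_list_of_set_nth:
  assumes "finite S" "k < card S"
  shows "rank S (sorted_list_of_set S ! k) = k"
proof -
  define L where "L = sorted_list_of_set S"
  have L: "set L = S" "length L = card S" "sorted L" "distinct L"
    using assms(1) unfolding L_def by simp_all
  have "{y\<in>S. y < L ! k} = (!) L ` {..<k}"
  proof safe
    fix y assume "y \<in> S" "y < L ! k"
    then obtain l where "l < length L" "y = L ! l" using L(1) by (metis in_set_conv_nth)
    moreover have "\<not> k \<le> l" using sorted_nth_mono[OF L(3)] calculation \<open>y < L ! k\<close> by force
    ultimately show "y \<in> (!) L ` {..<k}" by auto
  next
    fix l assume "l < k"
    then show "L ! l \<in> S" using assms(2) L by auto
    show "L ! l < L ! k"
      using \<open>l < k\<close> assms(2) L by (auto intro: sorted_wrt_nth_less simp: strict_sorted_iff)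
  qed
  moreover have "inj_on ((!) L) {..<k}" using L assms(2) by (intro inj_on_nth) auto
  ultimately show ?thesis unfolding rank_def L_def[symmetric] by (simp add: card_image)
qed

lemma sorted_list_of_set_nth_rank:
  assumes "finite S" "s \<in> S"
  shows "rank S s < card S" "sorted_list_of_set S ! rank S s = s"
proof -
  obtain k where "k < card S" "sorted_list_of_set S ! k = s"
    using assms by (metis in_set_conv_nth length_sorted_list_of_set set_sorted_list_of_set)
  then show "rank S s < card S" "sorted_list_of_set S ! rank S s = s"
    using rank_sorted_list_of_set_nth[OF assms(1)] by auto
qed

lemma rank_mono: "finite S \<Longrightarrow> s \<le> s' \<Longrightarrow> rank S s \<le> rank S s'"
  unfolding rank_def by (intro card_mono) auto

lemma rank_strict_mono: "finite S \<Longrightarrow> s \<in> S \<Longrightarrow> s < s' \<Longrightarrow> rank S s < rank S s'"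
  unfolding rank_def by (intro psubset_card_mono) auto

lemma card_le_rank: "finite S \<Longrightarrow> B \<subseteq> S \<Longrightarrow> \<forall>y\<in>B. y < s \<Longrightarrow> card B \<le> rank S s"
  unfolding rank_def by (intro card_mono) auto

lemma ex_inj_selection:
  assumes "finite (f ` A)" "m \<le> card (f ` A)"
  obtains g where "\<forall>k<m. g k \<in> A" "inj_on (f \<circ> g) {..<m}"
proof -
  obtain B where B: "B \<subseteq> f ` A" "card B = m"
    using obtain_subset_with_card_n[OF assms(2)] by blast
  then obtain h where h: "bij_betw h {..<m} B"
    using assms(1) ex_bij_betw_nat_finite lessThan_atLeast0 by (metis finite_subset)
  define g where "g k = inv_into A f (h k)" for k
  have "h k \<in> f ` A" if "k < m" for k using h B(1) that by (auto dest: bij_betwE)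
  then have "\<forall>k<m. g k \<in> A" "\<forall>k<m. f (g k) = h k"
    unfolding g_def by (auto intro: inv_into_into f_inv_into_f)
  moreover have "inj_on (f \<circ> g) {..<m}"
    using h calculation(2) by (auto simp: bij_betw_def inj_on_def)
  ultimately show ?thesis using that by blast
qed

section \<open>Piecewise linear functions with integer slopes\<close>

lemma breakpoint_segment_right:
  fixes ts :: "real list"
  assumes "ts \<noteq> []" "hd ts \<le> c" "c < last ts"
  shows "\<exists>k. Suc k < length ts \<and> ts ! k \<le> c \<and> c < ts ! Suc k"
  using assms
proof (induction ts)
  case (Cons x xs)
  show ?case
  proof (cases "xs = [] \<or> c < hd xs")
    case True
    with Cons.prems show ?thesis by (intro exI[of _ 0]) (cases xs; auto)
  next
    case False
    with Cons.IH Cons.prems obtain k where "Suc k < length xs" "xs ! k \<le> c" "c < xs ! Suc k"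
      by auto
    then show ?thesis by (intro exI[of _ "Suc k"]) auto
  qed
qed simp

lemma breakpoint_segment_left:
  fixes ts :: "real list"
  assumes "ts \<noteq> []" "hd ts < c" "c \<le> last ts"
  shows "\<exists>k. Suc k < length ts \<and> ts ! k < c \<and> c \<le> ts ! Suc k"
  using assms
proof (induction ts)
  case (Cons x xs)
  show ?case
  proof (cases "xs = [] \<or> c \<le> hd xs")
    case True
    with Cons.prems show ?thesis by (intro exI[of _ 0]) (cases xs; auto)
  next
    case False
    with Cons.IH Cons.prems obtain k where "Suc k < length xs" "xs ! k < c" "c \<le> xs ! Suc k"
      by auto
    then show ?thesis by (intro exI[of _ "Suc k"]) auto
  qed
qed simp

lemma linear_on_recenter:
  fixes g :: "real \<Rightarrow> real"
  assumes "\<forall>t. a \<le> t \<and> t \<le> b \<longrightarrow> g t = g a + m * (t - a)" "a \<le> c" "c \<le> b" "a \<le> x" "x \<le> b"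
  shows "g x = g c + m * (x - c)"
proof -
  have "g x = g a + m * (x - a)" "g c = g a + m * (c - a)"
    using assms(1)[rule_format, of x] assms(1)[rule_format, of c] assms(2-5) by blast+
  then show ?thesis by (simp add: algebra_simps)
qed

lemma pl_int_on_right:
  assumes "pl_int_on L g" "0 \<le> c" "c < L"
  shows "\<exists>e>0. \<exists>m::int. \<forall>x. c \<le> x \<and> x \<le> c + e \<longrightarrow> g x = g c + m * (x - c)"
proof -
  obtain ts :: "real list" where ts: "length ts \<ge> 2" "hd ts = 0" "last ts = L"
    and lin: "\<And>k. Suc k < length ts \<Longrightarrow> \<exists>m::int. \<forall>t. ts ! k \<le> t \<and> t \<le> ts ! Suc k \<longrightarrow>
                g t = g (ts ! k) + m * (t - ts ! k)"
    using assms(1) unfolding pl_int_on_def by blast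
  have "ts \<noteq> []" using ts(1) by auto
  then obtain k where k: "Suc k < length ts" "ts ! k \<le> c" "c < ts ! Suc k"
    using breakpoint_segment_right[of ts c] ts(2,3) assms(2,3) by auto
  obtain m :: int where m: "\<forall>t. ts ! k \<le> t \<and> t \<le> ts ! Suc k \<longrightarrow> g t = g (ts ! k) + m * (t - ts ! k)"
    using lin[OF k(1)] by blast
  show ?thesis
  proof (intro exI[of _ "ts ! Suc k - c"] conjI exI[of _ m] allI impI)
    fix x assume "c \<le> x \<and> x \<le> c + (ts ! Suc k - c)"
    then show "g x = g c + m * (x - c)" using k by (intro linear_on_recenter[OF m]) auto
  qed (use k(3) in simp)
qed

lemma pl_int_on_left:
  assumes "pl_int_on L g" "0 < c" "c \<le> L"
  shows "\<exists>e>0. \<exists>m::int. \<forall>x. c - e \<le> x \<and> x \<le> c \<longrightarrow> g x = g c + m * (x - c)"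
proof -
  obtain ts :: "real list" where ts: "length ts \<ge> 2" "hd ts = 0" "last ts = L"
    and lin: "\<And>k. Suc k < length ts \<Longrightarrow> \<exists>m::int. \<forall>t. ts ! k \<le> t \<and> t \<le> ts ! Suc k \<longrightarrow>
                g t = g (ts ! k) + m * (t - ts ! k)"
    using assms(1) unfolding pl_int_on_def by blast
  have "ts \<noteq> []" using ts(1) by auto
  then obtain k where k: "Suc k < length ts" "ts ! k < c" "c \<le> ts ! Suc k"
    using breakpoint_segment_left[of ts c] ts(2,3) assms(2,3) by auto
  obtain m :: int where m: "\<forall>t. ts ! k \<le> t \<and> t \<le> ts ! Suc k \<longrightarrow> g t = g (ts ! k) + m * (t - ts ! k)"
    using lin[OF k(1)] by blast
  show ?thesis
  proof (intro exI[of _ "c - ts ! k"] conjI exI[of _ m] allI impI)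
    fix x assume "c - (c - ts ! k) \<le> x \<and> x \<le> c"
    then show "g x = g c + m * (x - c)" using k by (intro linear_on_recenter[OF m]) auto
  qed (use k(2) in simp)
qed

section \<open>Tangent rays\<close>

text \<open>ray_pt G p \<eta> t is the point at distance t from p in direction \<eta>; it is a genuine
  point of the graph only for 0 < t < ray_len G p \<eta>.\<close>

definition ray_param :: "('v,'e) mgraph \<Rightarrow> ('v,'e) point \<Rightarrow> 'e \<times> bool \<Rightarrow> real \<Rightarrow> real" where
  "ray_param G p \<eta> t = coord G p \<eta> + (if snd \<eta> then t else - t)"

definition ray_pt :: "('v,'e) mgraph \<Rightarrow> ('v,'e) point \<Rightarrow> 'e \<times> bool \<Rightarrow> real \<Rightarrow> ('v,'e) point" where
  "ray_pt G p \<eta> t = Inner (fst \<eta>) (ray_param G p \<eta> t)"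

definition ray_val ::
  "('v,'e) mgraph \<Rightarrow> ('v,'e) point \<Rightarrow> 'e \<times> bool \<Rightarrow> (('v,'e) point \<Rightarrow> real) \<Rightarrow> real \<Rightarrow> real" where
  "ray_val G p \<eta> f t = edge_fun G f (fst \<eta>) (ray_param G p \<eta> t)"

definition ray_len :: "('v,'e) mgraph \<Rightarrow> ('v,'e) point \<Rightarrow> 'e \<times> bool \<Rightarrow> real" where
  "ray_len G p \<eta> = (if snd \<eta> then elen G (fst \<eta>) - coord G p \<eta> else coord G p \<eta>)"

lemma tangent_cases:
  assumes "metric_graph G" "p \<in> points G" "\<eta> \<in> tangents G p"
  obtains (Vert) x e b where "p = Vert x" "\<eta> = (e, b)" "e \<in> edges G" "0 < elen G e"
      "if b then src G e = x else tgt G e = x"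
    | (Inner) e \<tau> b where "p = Inner e \<tau>" "\<eta> = (e, b)" "e \<in> edges G" "0 < \<tau>" "\<tau> < elen G e"
proof (cases p)
  case (Vert x)
  obtain e b where eb: "\<eta> = (e, b)" by (cases \<eta>)
  with assms(3) Vert have "e \<in> edges G" "if b then src G e = x else tgt G e = x"
    unfolding tangents_def by auto
  moreover have "0 < elen G e" using assms(1) calculation(1) unfolding metric_graph_def by blast
  ultimately show ?thesis using that(1) Vert eb by blast
next
  case (Inner e \<tau>)
  then show ?thesis
    using assms(2,3) that(2) unfolding points_def tangents_def by (cases \<eta>) auto
qed

lemma tangent_edge: "metric_graph G \<Longrightarrow> p \<in> points G \<Longrightarrow> \<eta> \<in> tangents G p \<Longrightarrow> fst \<eta> \<in> edges G"
  by (cases rule: tangent_cases) auto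

lemma ray_len_pos: "metric_graph G \<Longrightarrow> p \<in> points G \<Longrightarrow> \<eta> \<in> tangents G p \<Longrightarrow> 0 < ray_len G p \<eta>"
  by (cases rule: tangent_cases) (auto simp: ray_len_def coord_def)

lemma coord_le_elen:
  "metric_graph G \<Longrightarrow> p \<in> points G \<Longrightarrow> \<eta> \<in> tangents G p \<Longrightarrow> 0 \<le> coord G p \<eta> \<and> coord G p \<eta> \<le> elen G (fst \<eta>)"
  by (cases rule: tangent_cases) (auto simp: coord_def)

lemma ray_val_0: "metric_graph G \<Longrightarrow> p \<in> points G \<Longrightarrow> \<eta> \<in> tangents G p \<Longrightarrow> ray_val G p \<eta> f 0 = f p"
  by (cases rule: tangent_cases)
    (auto simp: ray_val_def ray_param_def coord_def edge_fun_def split: if_splits)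

lemma ray_pt_in_points:
  "metric_graph G \<Longrightarrow> p \<in> points G \<Longrightarrow> \<eta> \<in> tangents G p \<Longrightarrow> 0 < t \<Longrightarrow> t < ray_len G p \<eta> \<Longrightarrow>
    ray_pt G p \<eta> t \<in> points G"
  by (cases rule: tangent_cases) (auto simp: ray_pt_def ray_param_def ray_len_def coord_def points_def)

lemma ray_val_eq:
  "metric_graph G \<Longrightarrow> p \<in> points G \<Longrightarrow> \<eta> \<in> tangents G p \<Longrightarrow> 0 < t \<Longrightarrow> t < ray_len G p \<eta> \<Longrightarrow>
    ray_val G p \<eta> f t = f (ray_pt G p \<eta> t)"
  by (cases rule: tangent_cases)
    (auto simp: ray_val_def ray_pt_def ray_param_def ray_len_def coord_def edge_fun_def)

lemma ray_pt_inj: "ray_pt G p \<eta> t = ray_pt G p \<eta> t' \<Longrightarrow> t = t'"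
  unfolding ray_pt_def ray_param_def by (auto split: if_splits)

lemma ray_pt_distinct:
  assumes "\<eta> \<in> tangents G p" "\<eta>' \<in> tangents G p" "\<eta> \<noteq> \<eta>'"
    and "0 < t" "2 * t < ray_len G p \<eta>" "0 < t'" "2 * t' < ray_len G p \<eta>'"
  shows "ray_pt G p \<eta> t \<noteq> ray_pt G p \<eta>' t'"
proof
  assume eq: "ray_pt G p \<eta> t = ray_pt G p \<eta>' t'"
  then have "fst \<eta> = fst \<eta>'" unfolding ray_pt_def by simp
  with assms(3) have "snd \<eta>' = (\<not> snd \<eta>)" by (cases \<eta>; cases \<eta>') auto
  with eq assms(4-7) show False
    by (cases p; cases "snd \<eta>") (auto simp: ray_pt_def ray_param_def ray_len_def coord_def)
qed

lemma Lim_at_right_eventually_const: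
  "\<forall>\<^sub>F h in at_right (0::real). q h = c \<Longrightarrow> Lim (at_right 0) q = c"
  by (rule tendsto_Lim) (auto intro: tendsto_eventually)

lemma slope_eqI:
  assumes "\<forall>\<^sub>F h in at_right 0. ray_val G p \<eta> f h = ray_val G p \<eta> f 0 + \<sigma> * h"
  shows "slope G f p \<eta> = \<sigma>"
proof -
  have "slope G f p \<eta> = Lim (at_right 0) (\<lambda>h. (ray_val G p \<eta> f h - ray_val G p \<eta> f 0) / h)"
    unfolding slope_def ray_val_def ray_param_def by simp
  also have "\<dots> = \<sigma>"
    using assms eventually_at_right_less[of 0]
    by (intro Lim_at_right_eventually_const) (auto elim: eventually_elim2)
  finally show ?thesis .
qed

lemma PL_ray_linear:
  assumes "metric_graph G" "p \<in> points G" "\<eta> \<in> tangents G p" "PL G g"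
  shows "\<exists>e>0. \<exists>m::int. \<forall>t. 0 \<le> t \<and> t \<le> e \<longrightarrow> ray_val G p \<eta> g t = ray_val G p \<eta> g 0 + m * t"
proof -
  let ?c = "coord G p \<eta>" and ?g = "edge_fun G g (fst \<eta>)"
  have pl: "pl_int_on (elen G (fst \<eta>)) ?g"
    using assms tangent_edge unfolding PL_def by blast
  have c: "0 \<le> ?c" "?c \<le> elen G (fst \<eta>)" and len: "0 < ray_len G p \<eta>"
    using coord_le_elen[OF assms(1-3)] ray_len_pos[OF assms(1-3)] by auto
  show ?thesis
  proof (cases "snd \<eta>")
    case True
    with len have "?c < elen G (fst \<eta>)" unfolding ray_len_def by simp
    then obtain e and m :: int where "e > 0"
      and lin: "\<forall>x. ?c \<le> x \<and> x \<le> ?c + e \<longrightarrow> ?g x = ?g ?c + m * (x - ?c)"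
      using pl_int_on_right[OF pl c(1)] by blast
    show ?thesis
    proof (intro exI[of _ e] conjI exI[of _ m] allI impI)
      fix t :: real assume "0 \<le> t \<and> t \<le> e"
      then show "ray_val G p \<eta> g t = ray_val G p \<eta> g 0 + m * t"
        using lin[rule_format, of "?c + t"] True by (simp add: ray_val_def ray_param_def)
    qed fact
  next
    case False
    with len have "0 < ?c" unfolding ray_len_def by simp
    then obtain e and m :: int where "e > 0"
      and lin: "\<forall>x. ?c - e \<le> x \<and> x \<le> ?c \<longrightarrow> ?g x = ?g ?c + m * (x - ?c)"
      using pl_int_on_left[OF pl _ c(2)] by blast
    show ?thesis
    proof (intro exI[of _ e] conjI exI[of _ "- m"] allI impI)
      fix t :: real assume "0 \<le> t \<and> t \<le> e"
      then show "ray_val G p \<eta> g t = ray_val G p \<eta> g 0 + of_int (- m) * t"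
        using lin[rule_format, of "?c - t"] False by (simp add: ray_val_def ray_param_def)
    qed fact
  qed
qed

lemma PL_ray_linear_slope:
  assumes "metric_graph G" "p \<in> points G" "\<eta> \<in> tangents G p" "PL G g"
  shows "\<exists>e>0. slope G g p \<eta> \<in> \<int> \<and>
           (\<forall>t. 0 \<le> t \<and> t \<le> e \<longrightarrow> ray_val G p \<eta> g t = ray_val G p \<eta> g 0 + slope G g p \<eta> * t)"
proof -
  obtain e and m :: int where e: "e > 0"
    and lin: "\<forall>t. 0 \<le> t \<and> t \<le> e \<longrightarrow> ray_val G p \<eta> g t = ray_val G p \<eta> g 0 + real_of_int m * t"
    using PL_ray_linear[OF assms] by blast
  have "\<forall>\<^sub>F h in at_right 0. ray_val G p \<eta> g h = ray_val G p \<eta> g 0 + real_of_int m * h"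
    unfolding eventually_at_right_field using e lin less_imp_le by blast
  then have "slope G g p \<eta> = m" by (rule slope_eqI)
  with e lin show ?thesis by (metis Ints_of_int)
qed

lemma slope_Inner:
  assumes "\<forall>\<^sub>F y in nhds \<tau>. edge_fun G f e y = edge_fun G f e \<tau> + c * (y - \<tau>)"
  shows "slope G f (Inner e \<tau>) (e, b) = (if b then c else - c)"
proof -
  let ?d = "\<lambda>h::real. if b then h else - h"
  have "filterlim (\<lambda>h. \<tau> + ?d h) (nhds \<tau>) (at_right 0)"
    by (cases b) (auto intro!: tendsto_eq_intros)
  from eventually_compose_filterlim[OF assms this]
  have "\<forall>\<^sub>F h in at_right 0. edge_fun G f e (\<tau> + ?d h) = edge_fun G f e \<tau> + c * ?d h"
    by (rule eventually_mono) simp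
  then have "\<forall>\<^sub>F h in at_right 0.
      (edge_fun G f e (\<tau> + ?d h) - edge_fun G f e \<tau>) / h = (if b then c else - c)"
    using eventually_at_right_less[of 0] by eventually_elim auto
  then show ?thesis
    unfolding slope_def coord_def by (simp add: Lim_at_right_eventually_const)
qed

lemma divf_ray_pt_eq_0:
  assumes "\<forall>\<^sub>F x in nhds t. ray_val G p \<eta> f x = ray_val G p \<eta> f t + \<sigma> * (x - t)"
  shows "divf G f (ray_pt G p \<eta> t) = 0"
proof -
  define sg :: real where "sg = (if snd \<eta> then 1 else -1)"
  define \<tau> where "\<tau> = ray_param G p \<eta> t"
  let ?\<phi> = "\<lambda>y. sg * (y - coord G p \<eta>)"
  have sg: "sg = 1 \<or> sg = -1" and param: "\<And>x. ray_param G p \<eta> x = coord G p \<eta> + sg * x"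
    unfolding sg_def ray_param_def by auto
  have "(?\<phi> \<longlongrightarrow> ?\<phi> \<tau>) (nhds \<tau>)"
    by (intro tendsto_intros filterlim_ident)
  moreover have "?\<phi> \<tau> = t"
    using sg unfolding \<tau>_def param by auto
  ultimately have "filterlim ?\<phi> (nhds t) (nhds \<tau>)" by simp
  from eventually_compose_filterlim[OF assms this]
  have "\<forall>\<^sub>F y in nhds \<tau>. edge_fun G f (fst \<eta>) y = edge_fun G f (fst \<eta>) \<tau> + sg * \<sigma> * (y - \<tau>)"
  proof eventually_elim
    case (elim y)
    have "ray_val G p \<eta> f (?\<phi> y) = edge_fun G f (fst \<eta>) y"
      using sg unfolding ray_val_def param by auto
    moreover have "ray_val G p \<eta> f t = edge_fun G f (fst \<eta>) \<tau>"
      unfolding ray_val_def \<tau>_def ..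
    moreover have "\<sigma> * (?\<phi> y - t) = sg * \<sigma> * (y - \<tau>)"
      using sg unfolding \<tau>_def param by (auto simp: algebra_simps)
    ultimately show ?case using elim by simp
  qed
  then have "slope G f (Inner (fst \<eta>) \<tau>) (fst \<eta>, b) = (if b then sg * \<sigma> else - (sg * \<sigma>))" for b
    by (rule slope_Inner)
  then show ?thesis
    unfolding divf_def ray_pt_def \<tau>_def[symmetric] tangents_def by simp
qed

lemma finite_tangents: "finite (edges G) \<Longrightarrow> finite (tangents G p)"
proof (cases p)
  case (Vert x)
  assume "finite (edges G)"
  moreover have "tangents G p \<subseteq> edges G \<times> UNIV" unfolding Vert tangents_def by auto
  ultimately show ?thesis by (metis finite_SigmaI finite_UNIV finite_subset)
qed (simp add: tangents_def)

lemma eventually_ray_pt_avoids: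
  "\<forall>\<^sub>F \<epsilon> in at_right 0. \<forall>t. 0 < t \<and> t \<le> \<epsilon> \<longrightarrow> ray_pt G p \<eta> t \<noteq> q"
proof (cases "\<exists>t0>0. ray_pt G p \<eta> t0 = q")
  case True
  then obtain t0 where "t0 > 0" "ray_pt G p \<eta> t0 = q" by blast
  then show ?thesis
    unfolding eventually_at_right_field by (intro exI[of _ t0]) (auto dest: ray_pt_inj)
qed (auto intro: always_eventually)

section \<open>A tropical linear series near a point\<close>

lemma ex_bend_parameters:
  fixes \<epsilon> M :: real
  assumes "0 < \<epsilon>" "0 \<le> M"
  shows "\<exists>(t :: nat \<Rightarrow> real) (t' :: nat \<Rightarrow> real). (\<forall>k\<ge>1. 0 < t k \<and> t k < \<epsilon> \<and> 2 * M * t k < \<epsilon> / 2) \<and>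
    (\<forall>k l. 1 \<le> k \<longrightarrow> k < l \<longrightarrow> t l < t k) \<and>
    (\<forall>k. \<epsilon> / 2 < t' k \<and> t' k < \<epsilon>) \<and> (\<forall>k l. k < l \<longrightarrow> t' k < t' l)"
proof -
  define \<delta> where "\<delta> = \<epsilon> / (4 * (M + 1))"
  define t :: "nat \<Rightarrow> real" where "t k = \<delta> / k" for k
  define t' :: "nat \<Rightarrow> real" where "t' k = \<epsilon> - \<epsilon> / (2 * k + 4)" for k
  have "\<epsilon> / (4 * (M + 1)) < \<epsilon> / 1" using assms by (intro divide_strict_left_mono) auto
  moreover have "2 * M * \<delta> = \<epsilon> / 2 * (M / (M + 1))" using assms unfolding \<delta>_def
    by (simp add: field_simps)
  moreover have "\<epsilon> / 2 * (M / (M + 1)) < \<epsilon> / 2 * 1" using assms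
    by (intro mult_strict_left_mono) auto
  ultimately have \<delta>: "0 < \<delta>" "\<delta> < \<epsilon>" "2 * M * \<delta> < \<epsilon> / 2"
    using assms unfolding \<delta>_def by auto
  have t_small: "0 < t k \<and> t k < \<epsilon> \<and> 2 * M * t k < \<epsilon> / 2" if "1 \<le> k" for k
  proof -
    have "t k \<le> \<delta>" using \<delta>(1) that by (simp add: t_def divide_le_eq)
    moreover have "2 * M * t k \<le> 2 * M * \<delta>" using assms(2) calculation
      by (intro mult_left_mono) auto
    ultimately show ?thesis using \<delta> that by (auto simp: t_def)
  qed
  have t_dec: "t l < t k" if "1 \<le> k" "k < l" for k l
    using \<delta>(1) that unfolding t_def by (intro divide_strict_left_mono) auto
  have t'_range: "\<epsilon> / 2 < t' k \<and> t' k < \<epsilon>" for k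
  proof -
    have "\<epsilon> / (2 * k + 4) < \<epsilon> / 2" using assms by (intro divide_strict_left_mono) auto
    moreover have "0 < \<epsilon> / (2 * k + 4)" using assms by simp
    ultimately show ?thesis unfolding t'_def by linarith
  qed
  have t'_inc: "t' k < t' l" if "k < l" for k l
    using assms that unfolding t'_def by (auto intro!: divide_strict_left_mono)
  show ?thesis
    by (rule exI[of _ t], rule exI[of _ t'], intro conjI allI impI)
      (use t_small t_dec t'_range t'_inc in auto)
qed

lemma ex_fun_divf_ge_one:
  assumes "trop_lin_series G r D \<Sigma>" "finite P" "P \<subseteq> points G" "card P = r"
  shows "\<exists>f\<in>\<Sigma>. \<forall>p\<in>P. 1 \<le> real_of_int (D p) + divf G f p"
proof -
  define E where "E p = (if p \<in> P then 1 else 0 :: int)" for p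
  have supp: "{p. E p \<noteq> 0} = P" unfolding E_def by auto
  have "effective_divisor G E" "deg E = int r"
    using assms(2-4) unfolding effective_divisor_def divisor_def deg_def supp by (auto simp: E_def)
  then obtain f where "f \<in> \<Sigma>" "\<forall>p\<in>points G. real_of_int (E p) \<le> real_of_int (D p) + divf G f p"
    using assms(1) unfolding trop_lin_series_def by blast
  then show ?thesis using assms(3) unfolding E_def by force
qed

locale tls_generators =
  fixes G :: "('v,'e) mgraph" and r :: nat and D :: "('v,'e) point \<Rightarrow> int"
    and \<Sigma> :: "(('v,'e) point \<Rightarrow> real) set" and v :: "('v,'e) point"
    and Gs :: "(('v,'e) point \<Rightarrow> real) set"
  assumes metric_graph: "metric_graph G" and series: "trop_lin_series G r D \<Sigma>"
    and v_point: "v \<in> points G"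
    and finite_Gs: "finite Gs" and Gs_subset: "Gs \<subseteq> \<Sigma>"
    and Gs_generates: "\<forall>f\<in>\<Sigma>. \<exists>n fs a. n > 0 \<and> (\<forall>i<n. fs i \<in> Gs) \<and>
      (\<forall>p\<in>points G. f p = trop_comb n fs a p)"
begin

abbreviation "T \<equiv> tangents G v"

lemma finite_T: "finite T"
  using metric_graph unfolding metric_graph_def by (intro finite_tangents) auto

lemma PL_generator: "g \<in> Gs \<Longrightarrow> PL G g"
  using series Gs_subset unfolding trop_lin_series_def RD_def by auto

lemma slope_generator_Ints: "\<eta> \<in> T \<Longrightarrow> g \<in> Gs \<Longrightarrow> slope G g v \<eta> \<in> \<int>"
  using PL_ray_linear_slope[OF metric_graph v_point _ PL_generator] by blast

lemma eventually_generators_linear: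
  "\<forall>\<^sub>F \<epsilon> in at_right 0. \<forall>\<eta>\<in>T. \<forall>g\<in>Gs. \<forall>t. 0 \<le> t \<and> t \<le> \<epsilon> \<longrightarrow>
     ray_val G v \<eta> g t = ray_val G v \<eta> g 0 + slope G g v \<eta> * t"
proof (intro eventually_ball_finite ballI finite_T finite_Gs)
  fix \<eta> g assume "\<eta> \<in> T" "g \<in> Gs"
  then obtain e where "e > 0" and lin:
    "\<forall>t. 0 \<le> t \<and> t \<le> e \<longrightarrow> ray_val G v \<eta> g t = ray_val G v \<eta> g 0 + slope G g v \<eta> * t"
    using PL_ray_linear_slope[OF metric_graph v_point _ PL_generator] by blast
  then show "\<forall>\<^sub>F \<epsilon> in at_right 0. \<forall>t. 0 \<le> t \<and> t \<le> \<epsilon> \<longrightarrow>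
               ray_val G v \<eta> g t = ray_val G v \<eta> g 0 + slope G g v \<eta> * t"
    unfolding eventually_at_right_field by (meson less_imp_le order.trans)
qed

lemma eventually_short_rays: "\<forall>\<^sub>F \<epsilon> in at_right 0. \<forall>\<eta>\<in>T. 2 * \<epsilon> < ray_len G v \<eta>"
proof (intro eventually_ball_finite ballI finite_T)
  fix \<eta> assume "\<eta> \<in> T"
  then have "0 < ray_len G v \<eta>" by (rule ray_len_pos[OF metric_graph v_point])
  then show "\<forall>\<^sub>F \<epsilon> in at_right 0. 2 * \<epsilon> < ray_len G v \<eta>"
    unfolding eventually_at_right_field by (intro exI[of _ "ray_len G v \<eta> / 2"]) auto
qed

lemma eventually_rays_avoid_support:
  "\<forall>\<^sub>F \<epsilon> in at_right 0. \<forall>\<eta>\<in>T. \<forall>t. 0 < t \<and> t \<le> \<epsilon> \<longrightarrow> D (ray_pt G v \<eta> t) = 0"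
proof -
  have "finite {p. D p \<noteq> 0}" using series unfolding trop_lin_series_def divisor_def by blast
  then have "\<forall>\<^sub>F \<epsilon> in at_right 0. \<forall>\<eta>\<in>T. \<forall>q\<in>{p. D p \<noteq> 0}. \<forall>t. 0 < t \<and> t \<le> \<epsilon> \<longrightarrow> ray_pt G v \<eta> t \<noteq> q"
    by (intro eventually_ball_finite ballI finite_T eventually_ray_pt_avoids)
  then show ?thesis by (rule eventually_mono) blast
qed

lemma ex_linearity_radius:
  obtains \<epsilon> where "0 < \<epsilon>"
    "\<forall>\<eta>\<in>T. \<forall>g\<in>Gs. \<forall>t. 0 \<le> t \<and> t \<le> \<epsilon> \<longrightarrow> ray_val G v \<eta> g t = ray_val G v \<eta> g 0 + slope G g v \<eta> * t"
    "\<forall>\<eta>\<in>T. 2 * \<epsilon> < ray_len G v \<eta>"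
    "\<forall>\<eta>\<in>T. \<forall>t. 0 < t \<and> t \<le> \<epsilon> \<longrightarrow> D (ray_pt G v \<eta> t) = 0"
  using eventually_happens'[OF trivial_limit_at_right_real
      eventually_conj[OF eventually_at_right_less
        eventually_conj[OF eventually_generators_linear
          eventually_conj[OF eventually_short_rays eventually_rays_avoid_support]]]] that
  by blast

definition represents ::
  "(('v,'e) point \<Rightarrow> real) \<Rightarrow> nat \<Rightarrow> (nat \<Rightarrow> ('v,'e) point \<Rightarrow> real) \<Rightarrow> (nat \<Rightarrow> real) \<Rightarrow> bool"
where
  "represents f n fs a \<longleftrightarrow> n > 0 \<and> (\<forall>i<n. fs i \<in> Gs) \<and> (\<forall>p\<in>points G. f p = trop_comb n fs a p)"

abbreviation offsets :: "(nat \<Rightarrow> ('v,'e) point \<Rightarrow> real) \<Rightarrow> (nat \<Rightarrow> real) \<Rightarrow> nat \<Rightarrow> real" where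
  "offsets fs a \<equiv> \<lambda>i. fs i v + a i"

abbreviation slopes :: "'e \<times> bool \<Rightarrow> (nat \<Rightarrow> ('v,'e) point \<Rightarrow> real) \<Rightarrow> nat \<Rightarrow> real" where
  "slopes \<eta> fs \<equiv> \<lambda>i. slope G (fs i) v \<eta>"

lemma ex_represents: "f \<in> \<Sigma> \<Longrightarrow> \<exists>n fs a. represents f n fs a"
  using Gs_generates unfolding represents_def by blast

lemma represents_mem: "represents f n fs a \<Longrightarrow> i < n \<Longrightarrow> fs i \<in> \<Sigma>"
  using Gs_subset unfolding represents_def by blast

definition array_of where
  "array_of eta f k =
     (if k < valence G v then rank (slope_set G \<Sigma> v (eta k)) (slope G f v (eta k)) else 0)"

lemma array_of_nth:
  "k < valence G v \<Longrightarrow> array_of eta f k = rank (slope_set G \<Sigma> v (eta k)) (slope G f v (eta k))"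
  unfolding array_of_def by simp

end

locale tls_near = tls_generators +
  fixes \<epsilon> :: real
  assumes eps_pos: "0 < \<epsilon>"
    and generators_linear: "\<forall>\<eta>\<in>T. \<forall>g\<in>Gs. \<forall>t. 0 \<le> t \<and> t \<le> \<epsilon> \<longrightarrow>
          ray_val G v \<eta> g t = ray_val G v \<eta> g 0 + slope G g v \<eta> * t"
    and short_rays: "\<forall>\<eta>\<in>T. 2 * \<epsilon> < ray_len G v \<eta>"
    and rays_avoid_support: "\<forall>\<eta>\<in>T. \<forall>t. 0 < t \<and> t \<le> \<epsilon> \<longrightarrow> D (ray_pt G v \<eta> t) = 0"
begin

lemma generator_on_ray:
  assumes "\<eta> \<in> T" "g \<in> Gs" "0 < t" "t \<le> \<epsilon>"
  shows "g (ray_pt G v \<eta> t) = g v + slope G g v \<eta> * t"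
proof -
  have "t < ray_len G v \<eta>" using assms short_rays eps_pos by force
  then have "g (ray_pt G v \<eta> t) = ray_val G v \<eta> g t"
    using ray_val_eq[OF metric_graph v_point assms(1,3)] by simp
  also have "\<dots> = g v + slope G g v \<eta> * t"
    using generators_linear assms ray_val_0[OF metric_graph v_point assms(1)] by simp
  finally show ?thesis .
qed

lemma ray_val_lower_envelope:
  assumes "represents f n fs a" "\<eta> \<in> T" "0 \<le> t" "t \<le> \<epsilon>"
  shows "ray_val G v \<eta> f t = lower_envelope n (offsets fs a) (slopes \<eta> fs) t"
proof (cases "t = 0")
  case True
  then show ?thesis
    using assms v_point ray_val_0[OF metric_graph v_point assms(2)]
    unfolding represents_def trop_comb_def lower_envelope_def by simp
next
  case False
  with assms(3) have t: "0 < t" "t < ray_len G v \<eta>" using assms(2,4) short_rays eps_pos by force+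
  have "ray_val G v \<eta> f t = trop_comb n fs a (ray_pt G v \<eta> t)"
    using assms(1) ray_val_eq[OF metric_graph v_point assms(2) t]
      ray_pt_in_points[OF metric_graph v_point assms(2) t]
    unfolding represents_def by simp
  also have "\<dots> = lower_envelope n (offsets fs a) (slopes \<eta> fs) t"
    unfolding trop_comb_def lower_envelope_def
    using assms(1,2,4) t(1)
      by (intro arg_cong[where f = Min] image_cong) (auto simp: represents_def generator_on_ray)
  finally show ?thesis .
qed

lemma slope_eq_Min_active:
  assumes "represents f n fs a" "\<eta> \<in> T"
  shows "slope G f v \<eta> = Min (slopes \<eta> fs ` active_lines n (offsets fs a) (slopes \<eta> fs) 0)"
proof (rule slope_eqI)
  have n: "n > 0" using assms(1) unfolding represents_def by simp
  have "\<forall>\<^sub>F h in at_right 0. h < \<epsilon>" using eps_pos unfolding eventually_at_right_field by blast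
  with eventually_at_right_less
    lower_envelope_right_slope[OF n, where t = 0 and C = "offsets fs a" and s = "slopes \<eta> fs"]
  show "\<forall>\<^sub>F h in at_right 0. ray_val G v \<eta> f h =
          ray_val G v \<eta> f 0 + Min (slopes \<eta> fs ` active_lines n (offsets fs a) (slopes \<eta> fs) 0) * h"
  proof eventually_elim
    case (elim h)
    then show ?case using ray_val_lower_envelope[OF assms] eps_pos by simp
  qed
qed

lemma active_slopes_differ_at_bend:
  assumes "represents f n fs a" "\<eta> \<in> T" "0 < t" "t < \<epsilon>" "divf G f (ray_pt G v \<eta> t) \<noteq> 0"
  shows "\<exists>x\<in>active_lines n (offsets fs a) (slopes \<eta> fs) t.
           \<exists>y\<in>active_lines n (offsets fs a) (slopes \<eta> fs) t. slopes \<eta> fs x < slopes \<eta> fs y"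
proof (rule ccontr)
  let ?A = "active_lines n (offsets fs a) (slopes \<eta> fs) t"
  assume "\<not> ?thesis"
  have n: "n > 0" using assms(1) unfolding represents_def by simp
  then obtain x where x: "x \<in> ?A" using active_lines_nonempty by blast
  with \<open>\<not> ?thesis\<close> have "\<forall>y\<in>?A. slopes \<eta> fs y = slopes \<eta> fs x" by (meson linorder_neqE)
  from lower_envelope_locally_linear[OF n this]
  have "\<forall>\<^sub>F y in nhds t. lower_envelope n (offsets fs a) (slopes \<eta> fs) y =
          lower_envelope n (offsets fs a) (slopes \<eta> fs) t + slopes \<eta> fs x * (y - t)" .
  moreover have "\<forall>\<^sub>F y in nhds t. y \<in> {0<..<\<epsilon>}"
    using assms(3,4) by (intro eventually_nhds_in_open) auto
  ultimately have "\<forall>\<^sub>F y in nhds t. ray_val G v \<eta> f y = ray_val G v \<eta> f t + slopes \<eta> fs x * (y - t)"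
  proof eventually_elim
    case (elim y)
    then show ?case using ray_val_lower_envelope[OF assms(1,2)] assms(3,4) by simp
  qed
  then show False using divf_ray_pt_eq_0 assms(5) by blast
qed

lemma slope_set_subset: "\<eta> \<in> T \<Longrightarrow> slope_set G \<Sigma> v \<eta> \<subseteq> (\<lambda>g. slope G g v \<eta>) ` Gs"
proof
  fix s assume "\<eta> \<in> T" "s \<in> slope_set G \<Sigma> v \<eta>"
  then obtain f n fs a where f: "s = slope G f v \<eta>" "represents f n fs a"
    using ex_represents unfolding slope_set_def by blast
  then have "n > 0" "\<forall>i<n. fs i \<in> Gs" unfolding represents_def by auto
  moreover have "s \<in> slopes \<eta> fs ` active_lines n (offsets fs a) (slopes \<eta> fs) 0"
    unfolding f(1) slope_eq_Min_active[OF f(2) \<open>\<eta> \<in> T\<close>]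
    using calculation finite_active_lines active_lines_nonempty by (intro Min_in) auto
  ultimately show "s \<in> (\<lambda>g. slope G g v \<eta>) ` Gs" by (auto dest: active_lines_less)
qed

lemma finite_slope_set: "\<eta> \<in> T \<Longrightarrow> finite (slope_set G \<Sigma> v \<eta>)"
  using slope_set_subset finite_Gs finite_subset by blast

lemma slope_mem_slope_set: "f \<in> \<Sigma> \<Longrightarrow> slope G f v \<eta> \<in> slope_set G \<Sigma> v \<eta>"
  unfolding slope_set_def by blast

text \<open>Generators with r + 2 distinct slopes along \<eta> are lines near v whose pairwise
  crossings are isolated, so at a generic point of the ray their tropical combination is
  attained only once, contradicting tropical dependence.\<close>

lemma card_slope_set_le:
  assumes "\<eta> \<in> T"
  shows "card (slope_set G \<Sigma> v \<eta>) \<le> r + 1"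
proof (rule ccontr)
  let ?sl = "\<lambda>g. slope G g v \<eta>"
  assume "\<not> ?thesis"
  then have "r + 2 \<le> card (?sl ` Gs)"
    using card_mono[OF finite_imageI[OF finite_Gs] slope_set_subset[OF assms]] by linarith
  then obtain fs where fs: "\<forall>k<r+2. fs k \<in> Gs" and inj: "inj_on (?sl \<circ> fs) {..<r+2}"
    by (rule ex_inj_selection[OF finite_imageI[OF finite_Gs]])
  then have "trop_dependent G (r+2) fs"
    using series Gs_subset unfolding trop_lin_series_def by blast
  then obtain a where dep: "\<forall>p\<in>points G. \<exists>i1<r+2. \<exists>i2<r+2. i1 \<noteq> i2 \<and>
      fs i1 p + a i1 = trop_comb (r+2) fs a p \<and> fs i2 p + a i2 = trop_comb (r+2) fs a p"
    unfolding trop_dependent_def by blast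
  obtain t where t: "0 < t" "t < \<epsilon>"
    and no_ties: "\<forall>i<r+2. \<forall>j<r+2.
      offsets fs a i + slopes \<eta> fs i * t = offsets fs a j + slopes \<eta> fs j * t \<longrightarrow> i = j"
    using ex_no_ties[of "slopes \<eta> fs" "r+2" 0 \<epsilon> "offsets fs a"] inj eps_pos by (auto simp: comp_def)
  let ?p = "ray_pt G v \<eta> t"
  have "t < ray_len G v \<eta>" using t assms short_rays by force
  then have "?p \<in> points G" using ray_pt_in_points[OF metric_graph v_point assms t(1)] by blast
  then obtain i1 i2 where i: "i1 < r+2" "i2 < r+2" "i1 \<noteq> i2"
    and tie: "fs i1 ?p + a i1 = trop_comb (r+2) fs a ?p" "fs i2 ?p + a i2 = trop_comb (r+2) fs a ?p"
    using dep by blast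
  have "fs i ?p = fs i v + slopes \<eta> fs i * t" if "i < r+2" for i
    using generator_on_ray[OF assms _ t(1)] fs that t by simp
  with i tie have "offsets fs a i1 + slopes \<eta> fs i1 * t = offsets fs a i2 + slopes \<eta> fs i2 * t"
    by (simp add: algebra_simps)
  then show False using no_ties[rule_format, OF i(1,2)] i(3) by blast
qed

lemma rank_slope_le: "f \<in> \<Sigma> \<Longrightarrow> \<eta> \<in> T \<Longrightarrow> rank (slope_set G \<Sigma> v \<eta>) (slope G f v \<eta>) \<le> r"
  using sorted_list_of_set_nth_rank(1)[OF finite_slope_set slope_mem_slope_set, of \<eta> f]
    card_slope_set_le[of \<eta>] by linarith

lemma ex_fun_bending_on_rays:
  assumes "\<eta> \<in> T" "\<eta>' \<in> T" "\<eta> \<noteq> \<eta>'" "ri + rj = r"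
    and "inj_on t {1..ri}" "t ` {1..ri} \<subseteq> {0<..<\<epsilon>}" "inj_on t' {1..rj}" "t' ` {1..rj} \<subseteq> {0<..<\<epsilon>}"
  shows "\<exists>f\<in>\<Sigma>. (\<forall>k\<in>{1..ri}. divf G f (ray_pt G v \<eta> (t k)) \<noteq> 0) \<and>
                (\<forall>k\<in>{1..rj}. divf G f (ray_pt G v \<eta>' (t' k)) \<noteq> 0)"
proof -
  let ?P = "(\<lambda>k. ray_pt G v \<eta> (t k)) ` {1..ri}" and ?P' = "(\<lambda>k. ray_pt G v \<eta>' (t' k)) ` {1..rj}"
  have short: "2 * s < ray_len G v \<zeta>" if "\<zeta> \<in> T" "s \<in> {0<..<\<epsilon>}" for \<zeta> s
  proof -
    have "2 * \<epsilon> < ray_len G v \<zeta>" using short_rays that(1) by blast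
    then show ?thesis using that(2) by simp
  qed
  have pts: "ray_pt G v \<zeta> s \<in> points G" and D0: "D (ray_pt G v \<zeta> s) = 0"
    if "\<zeta> \<in> T" "s \<in> {0<..<\<epsilon>}" for \<zeta> s
    using that short[OF that] rays_avoid_support
    by (auto intro!: ray_pt_in_points[OF metric_graph v_point])
  have "inj_on (\<lambda>k. ray_pt G v \<eta> (t k)) {1..ri}" "inj_on (\<lambda>k. ray_pt G v \<eta>' (t' k)) {1..rj}"
    using assms(5,7) unfolding inj_on_def by (blast dest: ray_pt_inj)+
  then have "card ?P = ri" "card ?P' = rj" by (simp_all add: card_image)
  moreover have "ray_pt G v \<eta> (t k) \<noteq> ray_pt G v \<eta>' (t' l)" if "k \<in> {1..ri}" "l \<in> {1..rj}" for k l
  proof (rule ray_pt_distinct[OF assms(1-3)])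
    have "t k \<in> {0<..<\<epsilon>}" "t' l \<in> {0<..<\<epsilon>}" using that assms(6,8) by blast+
    then show "0 < t k" "2 * t k < ray_len G v \<eta>" "0 < t' l" "2 * t' l < ray_len G v \<eta>'"
      using short[OF assms(1)] short[OF assms(2)] by auto
  qed
  then have "?P \<inter> ?P' = {}" by blast
  ultimately have card: "card (?P \<union> ?P') = r"
    using assms(4) by (simp add: card_Un_disjoint)
  have "?P \<union> ?P' \<subseteq> points G" using pts assms(1,2,6,8) by blast
  then obtain f where "f \<in> \<Sigma>" and f: "\<forall>p\<in>?P \<union> ?P'. 1 \<le> real_of_int (D p) + divf G f p"
    using ex_fun_divf_ge_one[OF series _ _ card] by blast
  have D0': "\<forall>p\<in>?P \<union> ?P'. D p = 0" using D0 assms(1,2,6,8) by blast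
  have "divf G f p \<noteq> 0" if "p \<in> ?P \<union> ?P'" for p
    using f[rule_format, OF that] D0'[rule_format, OF that] by simp
  with \<open>f \<in> \<Sigma>\<close> show ?thesis by blast
qed

lemma ex_active_pairs:
  assumes "represents f n fs a" "\<eta> \<in> T"
    and "\<forall>k\<in>K. 0 < t k \<and> t k < \<epsilon> \<and> divf G f (ray_pt G v \<eta> (t k)) \<noteq> 0"
  obtains \<alpha> \<beta> where "\<forall>k\<in>K. \<alpha> k \<in> active_lines n (offsets fs a) (slopes \<eta> fs) (t k) \<and>
      \<beta> k \<in> active_lines n (offsets fs a) (slopes \<eta> fs) (t k) \<and> slopes \<eta> fs (\<alpha> k) < slopes \<eta> fs (\<beta> k)"
proof -
  let ?A = "\<lambda>k. active_lines n (offsets fs a) (slopes \<eta> fs) (t k)"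
  have "\<forall>k\<in>K. \<exists>x. \<exists>y. x \<in> ?A k \<and> y \<in> ?A k \<and> slopes \<eta> fs x < slopes \<eta> fs y"
  proof
    fix k assume "k \<in> K"
    with assms(3) have "0 < t k" "t k < \<epsilon>" "divf G f (ray_pt G v \<eta> (t k)) \<noteq> 0" by auto
    from active_slopes_differ_at_bend[OF assms(1,2) this]
    show "\<exists>x. \<exists>y. x \<in> ?A k \<and> y \<in> ?A k \<and> slopes \<eta> fs x < slopes \<eta> fs y" by blast
  qed
  then have "\<exists>\<alpha>. \<forall>k\<in>K. \<exists>y. \<alpha> k \<in> ?A k \<and> y \<in> ?A k \<and> slopes \<eta> fs (\<alpha> k) < slopes \<eta> fs y"
    by (rule bchoice)
  then obtain \<alpha> where "\<forall>k\<in>K. \<exists>y. \<alpha> k \<in> ?A k \<and> y \<in> ?A k \<and> slopes \<eta> fs (\<alpha> k) < slopes \<eta> fs y"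
    by blast
  then have "\<exists>\<beta>. \<forall>k\<in>K. \<alpha> k \<in> ?A k \<and> \<beta> k \<in> ?A k \<and> slopes \<eta> fs (\<alpha> k) < slopes \<eta> fs (\<beta> k)"
    by (rule bchoice)
  then show ?thesis using that by blast
qed

lemma slopes_increase_towards_vertex:
  assumes rep: "represents f n fs a" and \<eta>: "\<eta> \<in> T"
    and bends: "\<forall>k\<in>{1..m}. 0 < t k \<and> t k < \<epsilon> \<and> divf G f (ray_pt G v \<eta> (t k)) \<noteq> 0"
    and dec: "\<forall>k\<in>{1..m}. \<forall>l\<in>{1..m}. k < l \<longrightarrow> t l < t k"
  obtains \<alpha> where "\<forall>k\<in>{1..m}. \<alpha> k \<in> active_lines n (offsets fs a) (slopes \<eta> fs) (t k)"
    "\<forall>k\<in>{1..m}. slopes \<eta> fs (\<alpha> k) < slope G f v \<eta>"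
    "\<forall>k\<in>{1..m}. \<forall>l\<in>{1..m}. k < l \<longrightarrow> slopes \<eta> fs (\<alpha> k) < slopes \<eta> fs (\<alpha> l)"
proof -
  let ?A = "active_lines n (offsets fs a) (slopes \<eta> fs)"
  obtain \<alpha> \<beta> where ab: "\<forall>k\<in>{1..m}. \<alpha> k \<in> ?A (t k) \<and> \<beta> k \<in> ?A (t k) \<and>
      slopes \<eta> fs (\<alpha> k) < slopes \<eta> fs (\<beta> k)"
    using ex_active_pairs[OF rep \<eta> bends] by blast
  have n: "n > 0" using rep unfolding represents_def by simp
  have "slopes \<eta> fs (\<alpha> k) < slope G f v \<eta>" if k: "k \<in> {1..m}" for k
  proof -
    have "slopes \<eta> fs (\<beta> k) \<le> Min (slopes \<eta> fs ` ?A 0)"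
      using ab k bends by (intro active_slope_le_Min_active[OF n]) auto
    then show ?thesis using ab k slope_eq_Min_active[OF rep \<eta>] by fastforce
  qed
  moreover have "slopes \<eta> fs (\<alpha> k) < slopes \<eta> fs (\<alpha> l)" if "k \<in> {1..m}" "l \<in> {1..m}" "k < l" for k l
  proof -
    have "slopes \<eta> fs (\<beta> k) \<le> slopes \<eta> fs (\<alpha> l)"
      using ab that dec by (intro active_slope_antimono[of "\<alpha> l" n _ _ "t l" "\<beta> k" "t k"]) auto
    then show ?thesis using ab that(1) by fastforce
  qed
  ultimately show ?thesis using that ab by blast
qed

lemma rank_beyond_bends:
  assumes rep: "represents f n fs a" and \<eta>: "\<eta> \<in> T" and "1 \<le> m"
    and bends: "\<forall>k\<in>{1..m}. 0 < t k \<and> t k < \<epsilon> \<and> divf G f (ray_pt G v \<eta> (t k)) \<noteq> 0"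
    and inc: "\<forall>k\<in>{1..m}. \<forall>l\<in>{1..m}. k < l \<longrightarrow> t k < t l"
  obtains \<beta> where "\<beta> \<in> active_lines n (offsets fs a) (slopes \<eta> fs) (t 1)"
    "m \<le> rank (slope_set G \<Sigma> v \<eta>) (slopes \<eta> fs \<beta>)" "slopes \<eta> fs \<beta> \<le> slope G f v \<eta>"
proof -
  let ?A = "active_lines n (offsets fs a) (slopes \<eta> fs)" and ?s = "slopes \<eta> fs"
  obtain \<alpha> \<beta> where ab: "\<forall>k\<in>{1..m}. \<alpha> k \<in> ?A (t k) \<and> \<beta> k \<in> ?A (t k) \<and> ?s (\<alpha> k) < ?s (\<beta> k)"
    using ex_active_pairs[OF rep \<eta> bends] by blast
  have one: "1 \<in> {1..m}" using \<open>1 \<le> m\<close> by simp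
  have dec: "?s (\<alpha> l) < ?s (\<alpha> k)" if "k \<in> {1..m}" "l \<in> {1..m}" "k < l" for k l
  proof -
    have "?s (\<beta> l) \<le> ?s (\<alpha> k)"
      using ab that inc by (intro active_slope_antimono[of "\<alpha> k" n _ _ "t k" "\<beta> l" "t l"]) auto
    then show ?thesis using ab that(2) by fastforce
  qed
  let ?B = "(\<lambda>k. ?s (\<alpha> k)) ` {1..m}"
  have "inj_on (\<lambda>k. ?s (\<alpha> k)) {1..m}"
    by (intro linorder_inj_onI') (metis dec less_irrefl)
  then have "card ?B = m" by (simp add: card_image)
  moreover have "?B \<subseteq> slope_set G \<Sigma> v \<eta>"
    using ab rep by (auto intro!: slope_mem_slope_set represents_mem dest: active_lines_less)
  moreover have "\<forall>y\<in>?B. y < ?s (\<beta> 1)"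
  proof
    fix y assume "y \<in> ?B"
    then obtain k where k: "k \<in> {1..m}" "y = ?s (\<alpha> k)" by blast
    have "?s (\<alpha> k) \<le> ?s (\<alpha> 1)" using dec[OF one k(1)] k(1) by (cases "k = 1") auto
    then show "y < ?s (\<beta> 1)" using ab one k(2) by fastforce
  qed
  ultimately have "m \<le> rank (slope_set G \<Sigma> v \<eta>) (?s (\<beta> 1))"
    using card_le_rank[OF finite_slope_set[OF \<eta>]] by metis
  moreover have "?s (\<beta> 1) \<le> slope G f v \<eta>"
    unfolding slope_eq_Min_active[OF rep \<eta>] using rep ab one bends
    by (intro active_slope_le_Min_active) (auto simp: represents_def)
  ultimately show ?thesis using that ab one by blast
qed

lemma slopes_bounded:
  assumes "represents f n fs a" "i < n"
  shows "\<bar>slopes \<eta> fs i\<bar> \<le> (\<Sum>g\<in>Gs. \<bar>slope G g v \<eta>\<bar>)"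
  using assms finite_Gs unfolding represents_def by (intro member_le_sum) auto

lemma rank_bound_across_rays:
  assumes rep: "represents f n fs a" and \<eta>: "\<eta> \<in> T" and \<eta>': "\<eta>' \<in> T" and "1 \<le> m"
    and bends: "\<forall>k\<in>{1..m}. 0 < t' k \<and> t' k < \<epsilon> \<and> divf G f (ray_pt G v \<eta>' (t' k)) \<noteq> 0"
    and inc: "\<forall>k\<in>{1..m}. \<forall>l\<in>{1..m}. k < l \<longrightarrow> t' k < t' l"
    and near: "\<forall>k\<in>K. \<alpha> k \<in> active_lines n (offsets fs a) (slopes \<eta> fs) (t k) \<and> 0 \<le> t k \<and>
                 2 * (\<Sum>g\<in>Gs. \<bar>slope G g v \<eta>\<bar>) * t k < t' 1"
  shows "m \<le> rank (slope_set G \<Sigma> v \<eta>') (slope G f v \<eta>')"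
    "\<forall>k\<in>K. m \<le> rank (slope_set G \<Sigma> v \<eta>') (slopes \<eta>' fs (\<alpha> k))"
proof -
  obtain \<beta> where \<beta>: "\<beta> \<in> active_lines n (offsets fs a) (slopes \<eta>' fs) (t' 1)"
    "m \<le> rank (slope_set G \<Sigma> v \<eta>') (slopes \<eta>' fs \<beta>)" "slopes \<eta>' fs \<beta> \<le> slope G f v \<eta>'"
    using rank_beyond_bends[OF rep \<eta>' \<open>1 \<le> m\<close> bends inc] by blast
  have fin: "finite (slope_set G \<Sigma> v \<eta>')" by (rule finite_slope_set[OF \<eta>'])
  have ints: "slopes \<eta>' fs i \<in> \<int>" if "i < n" for i
    using rep that slope_generator_Ints[OF \<eta>'] unfolding represents_def by blast
  show "m \<le> rank (slope_set G \<Sigma> v \<eta>') (slope G f v \<eta>')"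
    using \<beta>(2) rank_mono[OF fin \<beta>(3)] by linarith
  show "\<forall>k\<in>K. m \<le> rank (slope_set G \<Sigma> v \<eta>') (slopes \<eta>' fs (\<alpha> k))"
  proof
    fix k assume k: "k \<in> K"
    have "slopes \<eta>' fs \<beta> \<le> slopes \<eta>' fs (\<alpha> k)"
    proof (rule active_slope_cross)
      show "\<alpha> k \<in> active_lines n (offsets fs a) (slopes \<eta> fs) (t k)" "0 \<le> t k"
        "2 * (\<Sum>g\<in>Gs. \<bar>slope G g v \<eta>\<bar>) * t k < t' 1" using near k by auto
      show "\<beta> \<in> active_lines n (offsets fs a) (slopes \<eta>' fs) (t' 1)" by (fact \<beta>(1))
      show "\<forall>i<n. \<bar>slopes \<eta> fs i\<bar> \<le> (\<Sum>g\<in>Gs. \<bar>slope G g v \<eta>\<bar>)" using slopes_bounded[OF rep] by blast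
      show "slopes \<eta>' fs (\<alpha> k) \<in> \<int>" "slopes \<eta>' fs \<beta> \<in> \<int>"
        using ints near k \<beta>(1) by (auto dest: active_lines_less)
    qed
    then show "m \<le> rank (slope_set G \<Sigma> v \<eta>') (slopes \<eta>' fs (\<alpha> k))"
      using \<beta>(2) rank_mono[OF fin] by (meson order.trans)
  qed
qed

lemma ex_fun_bending_near_and_far:
  assumes "\<eta> \<in> T" "\<eta>' \<in> T" "\<eta> \<noteq> \<eta>'" "ri + rj = r" "0 \<le> M"
  obtains f t t' where "f \<in> \<Sigma>"
    "\<forall>k\<in>{1..ri}. 0 < t k \<and> t k < \<epsilon> \<and> divf G f (ray_pt G v \<eta> (t k)) \<noteq> 0"
    "\<forall>k\<in>{1..ri}. \<forall>l\<in>{1..ri}. k < l \<longrightarrow> t l < t k"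
    "\<forall>k\<in>{1..rj}. 0 < t' k \<and> t' k < \<epsilon> \<and> divf G f (ray_pt G v \<eta>' (t' k)) \<noteq> 0"
    "\<forall>k\<in>{1..rj}. \<forall>l\<in>{1..rj}. k < l \<longrightarrow> t' k < t' l"
    "\<forall>k\<in>{1..ri}. 2 * M * t k < t' 1"
proof -
  obtain t t' :: "nat \<Rightarrow> real" where t: "\<forall>k\<ge>1. 0 < t k \<and> t k < \<epsilon> \<and> 2 * M * t k < \<epsilon> / 2"
    and t_dec: "\<forall>k l. 1 \<le> k \<longrightarrow> k < l \<longrightarrow> t l < t k"
    and t': "\<forall>k. \<epsilon> / 2 < t' k \<and> t' k < \<epsilon>" and t'_inc: "\<forall>k l. k < l \<longrightarrow> t' k < t' l"
    using ex_bend_parameters[OF eps_pos assms(5)] by blast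
  have t'_pos: "0 < t' k" for k
    using t' eps_pos by (metis half_gt_zero order.strict_trans)
  have inj: "inj_on t {1..ri}"
    by (intro linorder_inj_onI') (metis atLeastAtMost_iff less_irrefl t_dec)
  have inj': "inj_on t' {1..rj}"
    by (intro linorder_inj_onI') (metis less_irrefl t'_inc)
  have range: "t ` {1..ri} \<subseteq> {0<..<\<epsilon>}" and range': "t' ` {1..rj} \<subseteq> {0<..<\<epsilon>}"
    using t t' t'_pos by auto
  obtain f where f: "f \<in> \<Sigma>" "\<forall>k\<in>{1..ri}. divf G f (ray_pt G v \<eta> (t k)) \<noteq> 0"
    "\<forall>k\<in>{1..rj}. divf G f (ray_pt G v \<eta>' (t' k)) \<noteq> 0"
    using ex_fun_bending_on_rays[OF assms(1-4) inj range inj' range'] by blast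
  have near: "\<forall>k\<in>{1..ri}. 0 < t k \<and> t k < \<epsilon> \<and> divf G f (ray_pt G v \<eta> (t k)) \<noteq> 0"
    using t f(2) by auto
  have far: "\<forall>k\<in>{1..rj}. 0 < t' k \<and> t' k < \<epsilon> \<and> divf G f (ray_pt G v \<eta>' (t' k)) \<noteq> 0"
    using t' t'_pos f(3) by blast
  have gap: "\<forall>k\<in>{1..ri}. 2 * M * t k < t' 1"
  proof
    fix k assume "k \<in> {1..ri}"
    then have "2 * M * t k < \<epsilon> / 2" using t by auto
    moreover have "\<epsilon> / 2 < t' 1" using t' by blast
    ultimately show "2 * M * t k < t' 1" by linarith
  qed
  have "\<forall>k\<in>{1..ri}. \<forall>l\<in>{1..ri}. k < l \<longrightarrow> t l < t k" "\<forall>k\<in>{1..rj}. \<forall>l\<in>{1..rj}. k < l \<longrightarrow> t' k < t' l"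
    using t_dec t'_inc by auto
  from that[OF f(1) near this(1) far this(2) gap] show ?thesis .
qed

lemma ex_slope_witnesses:
  assumes "\<eta> \<in> T" "\<eta>' \<in> T" "\<eta> \<noteq> \<eta>'" "ri + rj = r"
  obtains f g where "f \<in> \<Sigma>" "\<forall>k\<in>{1..ri}. g k \<in> \<Sigma>"
    "\<forall>k\<in>{1..ri}. \<forall>l\<in>{1..ri}. k < l \<longrightarrow> slope G (g k) v \<eta> < slope G (g l) v \<eta>"
    "\<forall>k\<in>{1..ri}. slope G (g k) v \<eta> < slope G f v \<eta>"
    "rj \<le> rank (slope_set G \<Sigma> v \<eta>') (slope G f v \<eta>')"
    "\<forall>k\<in>{1..ri}. rj \<le> rank (slope_set G \<Sigma> v \<eta>') (slope G (g k) v \<eta>')"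
proof -
  let ?M = "\<Sum>g\<in>Gs. \<bar>slope G g v \<eta>\<bar>"
  have "0 \<le> ?M" by (simp add: sum_nonneg)
  then obtain f t t' where f: "f \<in> \<Sigma>"
    and bends: "\<forall>k\<in>{1..ri}. 0 < t k \<and> t k < \<epsilon> \<and> divf G f (ray_pt G v \<eta> (t k)) \<noteq> 0"
    and dec: "\<forall>k\<in>{1..ri}. \<forall>l\<in>{1..ri}. k < l \<longrightarrow> t l < t k"
    and bends': "\<forall>k\<in>{1..rj}. 0 < t' k \<and> t' k < \<epsilon> \<and> divf G f (ray_pt G v \<eta>' (t' k)) \<noteq> 0"
    and inc': "\<forall>k\<in>{1..rj}. \<forall>l\<in>{1..rj}. k < l \<longrightarrow> t' k < t' l"
    and far: "\<forall>k\<in>{1..ri}. 2 * ?M * t k < t' 1"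
    using ex_fun_bending_near_and_far[OF assms] by blast
  obtain n fs a where rep: "represents f n fs a" using ex_represents[OF f] by blast
  obtain \<alpha> where \<alpha>: "\<forall>k\<in>{1..ri}. \<alpha> k \<in> active_lines n (offsets fs a) (slopes \<eta> fs) (t k)"
    "\<forall>k\<in>{1..ri}. slopes \<eta> fs (\<alpha> k) < slope G f v \<eta>"
    "\<forall>k\<in>{1..ri}. \<forall>l\<in>{1..ri}. k < l \<longrightarrow> slopes \<eta> fs (\<alpha> k) < slopes \<eta> fs (\<alpha> l)"
    using slopes_increase_towards_vertex[OF rep assms(1) bends dec] by blast
  have ranks: "rj \<le> rank (slope_set G \<Sigma> v \<eta>') (slope G f v \<eta>') \<and>
        (\<forall>k\<in>{1..ri}. rj \<le> rank (slope_set G \<Sigma> v \<eta>') (slopes \<eta>' fs (\<alpha> k)))"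
  proof (cases "rj = 0")
    case False
    then have one: "1 \<le> rj" by simp
    have "\<forall>k\<in>{1..ri}. \<alpha> k \<in> active_lines n (offsets fs a) (slopes \<eta> fs) (t k) \<and> 0 \<le> t k \<and>
        2 * ?M * t k < t' 1"
      using \<alpha>(1) bends far by (auto intro: less_imp_le)
    from rank_bound_across_rays[OF rep assms(1,2) one bends' inc' this] show ?thesis by blast
  qed simp
  have "\<forall>k\<in>{1..ri}. fs (\<alpha> k) \<in> \<Sigma>"
    using \<alpha>(1) represents_mem[OF rep] active_lines_less by blast
  from that[OF f this \<alpha>(3,2) conjunct1[OF ranks] conjunct2[OF ranks]] show ?thesis .
qed

lemma array_of_mem_local_array:
  assumes "f \<in> \<Sigma>" "\<forall>k<valence G v. eta k \<in> T"
  shows "array_of eta f \<in> local_array G r \<Sigma> v eta"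
  unfolding local_array_def
proof (intro CollectI conjI allI impI bexI[OF _ assms(1)])
  fix k assume k: "k < valence G v"
  then have "eta k \<in> T" using assms(2) by blast
  then show "array_of eta f k \<le> r"
    using k rank_slope_le[OF assms(1)] unfolding array_of_def by simp
  show "slope G f v (eta k) = sl_idx G \<Sigma> v (eta k) (array_of eta f k)"
    using k sorted_list_of_set_nth_rank(2)[OF finite_slope_set[OF \<open>eta k \<in> T\<close>]
        slope_mem_slope_set[OF assms(1)]]
    unfolding array_of_def sl_idx_def by simp
qed (simp add: array_of_def)

lemma array_of_strict_mono:
  assumes "k < valence G v" "eta k \<in> T" "f \<in> \<Sigma>" "slope G f v (eta k) < slope G f' v (eta k)"
  shows "array_of eta f k < array_of eta f' k"
  unfolding array_of_nth[OF assms(1)]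
  using assms(2-4) by (intro rank_strict_mono finite_slope_set slope_mem_slope_set)

lemma ex_funs_of_ranks:
  assumes "\<eta> \<in> T" "m \<le> card (slope_set G \<Sigma> v \<eta>)"
  obtains h where "\<forall>q<m. h q \<in> \<Sigma> \<and> rank (slope_set G \<Sigma> v \<eta>) (slope G (h q) v \<eta>) = q"
proof -
  let ?S = "slope_set G \<Sigma> v \<eta>"
  have "\<exists>h\<in>\<Sigma>. rank ?S (slope G h v \<eta>) = q" if "q < m" for q
  proof -
    define y where "y = sorted_list_of_set ?S ! q"
    have q: "q < card ?S" using that assms(2) by simp
    then have "y \<in> ?S" unfolding y_def
      using finite_slope_set[OF assms(1)]
        by (metis length_sorted_list_of_set nth_mem set_sorted_list_of_set)
    then obtain h where h: "h \<in> \<Sigma>" "slope G h v \<eta> = y"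
      unfolding slope_set_def by blast
    have "rank ?S (slope G h v \<eta>) = q"
      using rank_sorted_list_of_set_nth[OF finite_slope_set[OF assms(1)] q] unfolding h(2) y_def .
    with h(1) show ?thesis by blast
  qed
  then have "\<forall>q\<in>{..<m}. \<exists>h. h \<in> \<Sigma> \<and> rank ?S (slope G h v \<eta>) = q"
    by blast
  then have "\<exists>h. \<forall>q\<in>{..<m}. h q \<in> \<Sigma> \<and> rank ?S (slope G (h q) v \<eta>) = q"
    by (rule bchoice)
  then show ?thesis using that by auto
qed

lemma local_array_property_P2:
  assumes eta: "bij_betw eta {..<valence G v} T"
    and ij: "i < valence G v" "j < valence G v" "i \<noteq> j" and "ri + rj = r"
  shows "\<exists>z w u.
           z \<in> local_array G r \<Sigma> v eta \<and>
           (\<forall>k\<in>{1..ri}. w k \<in> local_array G r \<Sigma> v eta) \<and>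
           (\<forall>k\<in>{1..rj}. u k \<in> local_array G r \<Sigma> v eta) \<and>
           (\<forall>k. 1 \<le> k \<and> k < ri \<longrightarrow> w k i < w (Suc k) i) \<and>
           (ri \<ge> 1 \<longrightarrow> w ri i < z i) \<and>
           (\<forall>k. 1 \<le> k \<and> k < rj \<longrightarrow> u k j < u (Suc k) j) \<and>
           (rj \<ge> 1 \<longrightarrow> u rj j < z j) \<and>
           (\<forall>k\<in>{1..rj}. \<forall>k'\<in>{1..ri}. u k j < w k' j)"
proof -
  have etaT: "\<forall>k<valence G v. eta k \<in> T" using eta by (auto dest: bij_betwE)
  have "eta i \<in> T" "eta j \<in> T" "eta i \<noteq> eta j"
    using etaT ij eta by (auto dest: bij_betw_imp_inj_on inj_onD)
  then obtain f g where f: "f \<in> \<Sigma>" and g: "\<forall>k\<in>{1..ri}. g k \<in> \<Sigma>"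
    and g_inc: "\<forall>k\<in>{1..ri}. \<forall>l\<in>{1..ri}. k < l \<longrightarrow> slope G (g k) v (eta i) < slope G (g l) v (eta i)"
    and g_below: "\<forall>k\<in>{1..ri}. slope G (g k) v (eta i) < slope G f v (eta i)"
    and f_rank: "rj \<le> rank (slope_set G \<Sigma> v (eta j)) (slope G f v (eta j))"
    and g_rank: "\<forall>k\<in>{1..ri}. rj \<le> rank (slope_set G \<Sigma> v (eta j)) (slope G (g k) v (eta j))"
    using ex_slope_witnesses[OF _ _ _ \<open>ri + rj = r\<close>] by blast
  have "rj \<le> card (slope_set G \<Sigma> v (eta j))"
    using f_rank sorted_list_of_set_nth_rank(1)[OF finite_slope_set slope_mem_slope_set[OF f]]
      \<open>eta j \<in> T\<close> by (meson less_imp_le order.trans)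
  then obtain h
    where h: "\<forall>q<rj. h q \<in> \<Sigma> \<and> rank (slope_set G \<Sigma> v (eta j)) (slope G (h q) v (eta j)) = q"
    using ex_funs_of_ranks[OF \<open>eta j \<in> T\<close>] by blast
  note mono_i = array_of_strict_mono[where eta = eta, OF ij(1) \<open>eta i \<in> T\<close>]
  note at_j = array_of_nth[OF ij(2)]
  show ?thesis
  proof (rule exI[of _ "array_of eta f"], rule exI[of _ "\<lambda>k. array_of eta (g k)"],
      rule exI[of _ "\<lambda>k. array_of eta (h (k - 1))"], intro conjI allI ballI impI)
    show "array_of eta f \<in> local_array G r \<Sigma> v eta"
      by (rule array_of_mem_local_array[OF f etaT])
    show "array_of eta (g k) \<in> local_array G r \<Sigma> v eta" if "k \<in> {1..ri}" for k
      using g that by (intro array_of_mem_local_array[OF _ etaT]) blast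
    show "array_of eta (h (k - 1)) \<in> local_array G r \<Sigma> v eta" if "k \<in> {1..rj}" for k
      using h that by (intro array_of_mem_local_array[OF _ etaT]) auto
    show "array_of eta (g k) i < array_of eta (g (Suc k)) i" if "1 \<le> k \<and> k < ri" for k
      using that g g_inc by (intro mono_i) auto
    show "array_of eta (g ri) i < array_of eta f i" if "1 \<le> ri"
      using that g g_below by (intro mono_i) auto
    show "array_of eta (h (k - 1)) j < array_of eta (h (Suc k - 1)) j" if "1 \<le> k \<and> k < rj" for k
      using that h unfolding at_j by auto
    show "array_of eta (h (rj - 1)) j < array_of eta f j" if "1 \<le> rj"
      using that h f_rank unfolding at_j by auto
    show "array_of eta (h (k - 1)) j < array_of eta (g k') j" if "k \<in> {1..rj}" "k' \<in> {1..ri}" for k k'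
      using that h g_rank unfolding at_j by fastforce
  qed
qed

end

theorem mainTheorem11:
  fixes G :: "('v,'e) mgraph" and r :: nat and D :: "('v,'e) point \<Rightarrow> int"
    and \<Sigma> :: "(('v,'e) point \<Rightarrow> real) set" and v :: "('v,'e) point"
    and eta :: "nat \<Rightarrow> 'e \<times> bool" and i j ri rj :: nat
  assumes "metric_graph G"
    and "trop_lin_series G r D \<Sigma>"
    and "v \<in> points G"
    and "valence G v \<ge> 2"
    and "bij_betw eta {..<valence G v} (tangents G v)"
    and "i < valence G v" and "j < valence G v" and "i \<noteq> j"
    and "ri + rj = r"
  shows "\<exists>z w u.
           z \<in> local_array G r \<Sigma> v eta \<and>
           (\<forall>k\<in>{1..ri}. w k \<in> local_array G r \<Sigma> v eta) \<and>
           (\<forall>k\<in>{1..rj}. u k \<in> local_array G r \<Sigma> v eta) \<and>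
           (\<forall>k. 1 \<le> k \<and> k < ri \<longrightarrow> w k i < w (Suc k) i) \<and>
           (ri \<ge> 1 \<longrightarrow> w ri i < z i) \<and>
           (\<forall>k. 1 \<le> k \<and> k < rj \<longrightarrow> u k j < u (Suc k) j) \<and>
           (rj \<ge> 1 \<longrightarrow> u rj j < z j) \<and>
           (\<forall>k\<in>{1..rj}. \<forall>k'\<in>{1..ri}. u k j < w k' j)"
proof -
  obtain Gs where "finite Gs" "Gs \<subseteq> \<Sigma>"
    "\<forall>f\<in>\<Sigma>. \<exists>n fs a. n > 0 \<and> (\<forall>i<n. fs i \<in> Gs) \<and> (\<forall>p\<in>points G. f p = trop_comb n fs a p)"
    using assms(2) unfolding trop_lin_series_def finitely_generated_def by blast
  with assms(1-3) interpret tls_generators G r D \<Sigma> v Gs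
    by unfold_locales
  obtain \<epsilon> where "0 < \<epsilon>"
    "\<forall>\<eta>\<in>T. \<forall>g\<in>Gs. \<forall>t. 0 \<le> t \<and> t \<le> \<epsilon> \<longrightarrow> ray_val G v \<eta> g t = ray_val G v \<eta> g 0 + slope G g v \<eta> * t"
    "\<forall>\<eta>\<in>T. 2 * \<epsilon> < ray_len G v \<eta>"
    "\<forall>\<eta>\<in>T. \<forall>t. 0 < t \<and> t \<le> \<epsilon> \<longrightarrow> D (ray_pt G v \<eta> t) = 0"
    by (rule ex_linearity_radius)
  then interpret tls_near G r D \<Sigma> v Gs \<epsilon>
    by unfold_locales
  show ?thesis
    using local_array_property_P2[OF assms(5-9)] .
  \<comment> \<open>The hypothesis on the valence is implied by i \<noteq> j.\<close>
qed

end
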